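(* Let $\beta_0<\beta_2<\beta_1$, $n\ge2$ and $1\le j\le n-1$. Assume there exist $C_j,\alpha_j>0$ such that for all $t\ge0$ and all integers $\ell\in[0,t]$, $$\mathbb{P}_{\mathbf 0}\big(\Delta_jX^n_t>0,\ \tau^j_t\in[\ell-1,\ell)\big)\le C_je^{-\alpha_j(t-\ell)}.$$ Then $((\Delta_jX^n_t)^+)_{t\ge0}$ is exponentially tight, i.e. there exist $C,\alpha>0$ with $\mathbb{P}_{\mathbf 0}(\Delta_jX^n_t\ge k)\le Ce^{-\alpha k}$ for all $t\ge0$ and all $k\ge0$.
   Context: For $x\in\mathbb{N}^n$, with zero boundary convention $x(0)=x(n+1)=0$, let $V_j(x)=\mathbf 1_{\{x(j-1)>x(j)\}}+\mathbf 1_{\{x(j+1)>x(j)\}}$. The crystal process $X^n$ with parameter $\beta=(\beta_0,\beta_1,\beta_2)$ is the continuous-time Markov chain on $\mathbb{N}^n$ jumping from $x$ to $x+e_j$ at rate $\beta_{V_j(x)}$, no other transitions; $\mathbb{P}_{\mathbf 0}$ is its law from the zero configuration. $\Delta_jX^n_t=X^n_t(j)-X^n_t(j+1)$, $a^+=\max(a,0)$, and $\tau^j_t=\sup\{s\le t:\Delta_jX^n_s=0\}$. *)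

theory Defs
  imports "HOL-Probability.Probability"
begin

text \<open>Configurations x : {1..n} -> N are encoded as functions nat => nat that vanish
  outside {1..n}; in particular x 0 = x (n+1) = 0 (zero boundary convention).\<close>

definition zero_conf :: "nat \<Rightarrow> nat" where
  "zero_conf = (\<lambda>_. 0)"

definition Vnb :: "(nat \<Rightarrow> nat) \<Rightarrow> nat \<Rightarrow> nat" where
  "Vnb x j = (if x (j - 1) > x j then 1 else 0) + (if x (j + 1) > x j then 1 else 0)"

definition brate :: "real \<Rightarrow> real \<Rightarrow> real \<Rightarrow> nat \<Rightarrow> real" where
  "brate b0 b1 b2 v = (if v = 0 then b0 else if v = 1 then b1 else b2)"

text \<open>Construction of the crystal process by uniformization with the uniform
  rate bound b1 (the largest rate, as b0 < b2 < b1): a Poisson clock of total rate n*b1;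
  at each ring a site J is chosen uniformly in {1..n} and, given the current
  configuration x, the jump x -> x + e_J is performed with probability
  beta_{V_J(x)} / b1 (decided by an independent uniform U in [0,1]).
  The marks (E_k, J_k, U_k) are i.i.d.; E_k are the Exp(n*b1) inter-arrival times.\<close>

definition mark_measure :: "nat \<Rightarrow> real \<Rightarrow> (real \<times> nat \<times> real) measure" where
  "mark_measure n b1 =
     density lborel (\<lambda>e. ennreal (exponential_density (real n * b1) e))
     \<Otimes>\<^sub>M (measure_pmf (pmf_of_set {1..n}) \<Otimes>\<^sub>M uniform_measure lborel {0..1})"

definition crystal_space :: "nat \<Rightarrow> real \<Rightarrow> (real \<times> nat \<times> real) stream measure" where
  "crystal_space n b1 = stream_space (mark_measure n b1)"

primrec jchain :: "real \<Rightarrow> real \<Rightarrow> real \<Rightarrow> (real \<times> nat \<times> real) stream \<Rightarrow> nat \<Rightarrow> (nat \<Rightarrow> nat)" where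
  "jchain b0 b1 b2 \<omega> 0 = zero_conf"
| "jchain b0 b1 b2 \<omega> (Suc k) =
     (let x = jchain b0 b1 b2 \<omega> k; j = fst (snd (\<omega> !! k)); u = snd (snd (\<omega> !! k)) in
      if u < brate b0 b1 b2 (Vnb x j) / b1 then x(j := Suc (x j)) else x)"

definition ring_time :: "(real \<times> nat \<times> real) stream \<Rightarrow> nat \<Rightarrow> real" where
  "ring_time \<omega> k = (\<Sum>i<k. fst (\<omega> !! i))"

definition nrings :: "(real \<times> nat \<times> real) stream \<Rightarrow> real \<Rightarrow> nat" where
  "nrings \<omega> t = card {k. 0 < k \<and> ring_time \<omega> k \<le> t}"

definition crystal :: "real \<Rightarrow> real \<Rightarrow> real \<Rightarrow> (real \<times> nat \<times> real) stream \<Rightarrow> real \<Rightarrow> (nat \<Rightarrow> nat)" where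
  "crystal b0 b1 b2 \<omega> t = jchain b0 b1 b2 \<omega> (nrings \<omega> t)"

definition gapX :: "real \<Rightarrow> real \<Rightarrow> real \<Rightarrow> (real \<times> nat \<times> real) stream \<Rightarrow> nat \<Rightarrow> real \<Rightarrow> int" where
  "gapX b0 b1 b2 \<omega> j t = int (crystal b0 b1 b2 \<omega> t j) - int (crystal b0 b1 b2 \<omega> t (j + 1))"

definition tauX :: "real \<Rightarrow> real \<Rightarrow> real \<Rightarrow> (real \<times> nat \<times> real) stream \<Rightarrow> nat \<Rightarrow> real \<Rightarrow> real" where
  "tauX b0 b1 b2 \<omega> j t = Sup {s. 0 \<le> s \<and> s \<le> t \<and> gapX b0 b1 b2 \<omega> j s = 0}"

end

theory Submission
  imports Defs
begin

text \<open>
  Uniformize the dynamics by a Poisson clock of rate \<lambda> = n b1. If the gap is at least K at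
  time t, it has climbed by at least K jump-chain steps since its last zero tau, so for every
  a \<le> tau the K - 1 rings following the first ring after a all happen before t. By the strong
  Markov property at that first ring and a Chernoff bound with E e^(-\<lambda> E) = 1/2 for the
  Exp(\<lambda>) inter-arrival times E, this has probability at most e^(\<lambda>(t - a)) 2^(-(K - 1)).
  Splitting according to the unit interval [l - 1, l) containing tau, each piece is bounded
  both by the hypothesis, Cj e^(-\<alpha>j (t - l)), and by e^(\<lambda>(t - l + 1)) 2^(-(K - 1)). A weighted
  geometric mean of these two bounds decays geometrically in t - l and exponentially in K,
  and summing over l yields the exponential tail.
\<close>

section \<open>Measurability\<close>

lemma measurable_count_space_eq_borel:
  "measurable M (count_space UNIV) = (borel_measurable M :: ('a \<Rightarrow> 'b::{countable, t2_space}) set)"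
  by (rule measurable_cong_sets) (simp_all add: sets_borel_eq_count_space)

lemma ring_time_0 [simp]: "ring_time \<omega> 0 = 0"
  by (simp add: ring_time_def)

lemma ring_time_Suc: "ring_time \<omega> (Suc i) = ring_time \<omega> i + fst (\<omega> !! i)"
  by (simp add: ring_time_def)

lemma space_crystal_space: "space (crystal_space n b1) = UNIV"
  by (simp add: crystal_space_def mark_measure_def space_stream_space space_pair_measure)

lemma measurable_mark_time[measurable]:
  "(\<lambda>\<omega>. fst (\<omega> !! i)) \<in> borel_measurable (crystal_space n b1)"
  unfolding crystal_space_def mark_measure_def by measurable

lemma measurable_mark_site[measurable]:
  "(\<lambda>\<omega>. fst (snd (\<omega> !! i))) \<in> measurable (crystal_space n b1) (count_space UNIV)"
  unfolding crystal_space_def mark_measure_def by measurable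

lemma measurable_mark_uniform[measurable]:
  "(\<lambda>\<omega>. snd (snd (\<omega> !! i))) \<in> borel_measurable (crystal_space n b1)"
  unfolding crystal_space_def mark_measure_def by measurable

lemma measurable_ring_time[measurable]:
  "(\<lambda>\<omega>. ring_time \<omega> k) \<in> borel_measurable (crystal_space n b1)"
  unfolding ring_time_def by measurable

lemma measurable_jchain[measurable]:
  "(\<lambda>\<omega>. jchain b0 b1 b2 \<omega> m i) \<in> measurable (crystal_space n b1) (count_space UNIV)"
proof (induction m arbitrary: i)
  case 0
  then show ?case by simp
next
  case (Suc m)
  have [measurable]: "(\<lambda>\<omega>. jchain b0 b1 b2 \<omega> m i) \<in> measurable (crystal_space n b1) (count_space UNIV)"
    "(\<lambda>\<omega>. jchain b0 b1 b2 \<omega> m i) \<in> borel_measurable (crystal_space n b1)" for i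
    using Suc.IH by (simp_all add: measurable_count_space_eq_borel)
  define step where "step j \<omega> = (let x = jchain b0 b1 b2 \<omega> m in
    if snd (snd (\<omega> !! m)) < brate b0 b1 b2 (Vnb x j) / b1 then (x(j := Suc (x j))) i else x i)"
    for j \<omega>
  have "step j \<in> measurable (crystal_space n b1) (count_space UNIV)" for j
    unfolding step_def Let_def Vnb_def brate_def fun_upd_def by measurable
  from measurable_compose_countable[where f=step, OF this measurable_mark_site[of m]]
  show ?case by (simp add: step_def Let_def if_distrib[of "\<lambda>x. x i"])
qed

definition chain_gap :: "real \<Rightarrow> real \<Rightarrow> real \<Rightarrow> (real \<times> nat \<times> real) stream \<Rightarrow> nat \<Rightarrow> nat \<Rightarrow> int"
  where "chain_gap b0 b1 b2 \<omega> j m = int (jchain b0 b1 b2 \<omega> m j) - int (jchain b0 b1 b2 \<omega> m (j + 1))"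

lemma gapX_eq_chain_gap: "gapX b0 b1 b2 \<omega> j s = chain_gap b0 b1 b2 \<omega> j (nrings \<omega> s)"
  unfolding gapX_def chain_gap_def crystal_def ..

lemma chain_gap_0 [simp]: "chain_gap b0 b1 b2 \<omega> j 0 = 0"
  unfolding chain_gap_def by (simp add: zero_conf_def)

lemma measurable_gapX[measurable]:
  assumes [measurable]: "r \<in> borel_measurable (crystal_space n b1)"
  shows "(\<lambda>\<omega>. gapX b0 b1 b2 \<omega> j (r \<omega>)) \<in> measurable (crystal_space n b1) (count_space UNIV)"
proof -
  have [measurable]: "(\<lambda>\<omega>. chain_gap b0 b1 b2 \<omega> j m) \<in> measurable (crystal_space n b1) (count_space UNIV)" for m
    unfolding chain_gap_def measurable_count_space_eq_borel by measurable
  show ?thesis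
    unfolding gapX_eq_chain_gap nrings_def
    by (rule measurable_compose_countable[where f="\<lambda>m \<omega>. chain_gap b0 b1 b2 \<omega> j m"]) measurable
qed

lemma gapX_eq_0_if_infinite_rings:
  "infinite {k. 0 < k \<and> ring_time \<omega> k \<le> s} \<Longrightarrow> gapX b0 b1 b2 \<omega> j s = 0"
  by (simp add: gapX_eq_chain_gap nrings_def)

text \<open>The gap only changes at ring times, so a zero of the gap to the right of any threshold
  can be moved to a rational time, to a ring time or to the horizon t. This reduces the
  supremum defining tauX to countably many measurable events.\<close>
lemma gapX_zero_countable_witness:
  assumes s: "0 \<le> s" "s \<le> t" "gapX b0 b1 b2 \<omega> j s = 0" "c < s"
  shows "\<exists>s'. (0 \<le> s' \<and> s' \<le> t \<and> gapX b0 b1 b2 \<omega> j s' = 0 \<and> c < s') \<and>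
    (s' \<in> \<rat> \<or> s' = t \<or> s' \<in> range (ring_time \<omega>))"
proof -
  define R where "R s = {k. 0 < k \<and> ring_time \<omega> k \<le> s}" for s
  consider "s \<in> range (ring_time \<omega>)" | "infinite (R s)" | "s \<notin> range (ring_time \<omega>)" "finite (R s)"
    by blast
  then show ?thesis
  proof cases
    case 1
    then show ?thesis using s by blast
  next
    case 2
    moreover have "R s \<subseteq> R t"
      using s(2) by (auto simp: R_def)
    ultimately have "infinite (R t)"
      using finite_subset by blast
    then show ?thesis
      using s by (intro exI[of _ t]) (auto simp: R_def gapX_eq_0_if_infinite_rings)
  next
    case 3
    define lo where "lo = Max (insert c (insert 0 (ring_time \<omega> ` R s)))"
    have fin: "finite (insert c (insert 0 (ring_time \<omega> ` R s)))"
      using 3 by simp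
    have "s \<noteq> 0"
      using 3 by (metis ring_time_0 rangeI)
    moreover have "ring_time \<omega> k < s" if "k \<in> R s" for k
      using that 3 by (force simp: R_def)
    ultimately have "lo < s"
      using s fin by (auto simp: lo_def Max_less_iff)
    then obtain q where q: "q \<in> \<rat>" "lo < q" "q < s"
      using Rats_dense_in_real by blast
    have "x \<le> lo" if "x \<in> insert c (insert 0 (ring_time \<omega> ` R s))" for x
      unfolding lo_def using fin that by (rule Max_ge)
    then have ge: "c \<le> lo" "0 \<le> lo" "\<And>k. k \<in> R s \<Longrightarrow> ring_time \<omega> k \<le> lo"
      by auto
    have "R q = R s"
      using q ge by (fastforce simp: R_def)
    then have "gapX b0 b1 b2 \<omega> j q = 0"
      using s(3) by (simp add: gapX_eq_chain_gap nrings_def R_def)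
    then show ?thesis
      using q ge s by (intro exI[of _ q]) auto
  qed
qed

lemma measurable_tauX[measurable]:
  "(\<lambda>\<omega>. tauX b0 b1 b2 \<omega> j t) \<in> borel_measurable (crystal_space n b1)"
proof (rule borel_measurable_iff_greater[THEN iffD2], intro allI)
  fix c :: real
  define P where "P \<omega> c s \<longleftrightarrow> 0 \<le> s \<and> s \<le> t \<and> gapX b0 b1 b2 \<omega> j s = 0 \<and> c < s" for \<omega> c s
  have ex_iff: "(\<exists>s. P \<omega> c s) \<longleftrightarrow>
      (\<exists>q::rat. P \<omega> c (of_rat q)) \<or> P \<omega> c t \<or> (\<exists>k. P \<omega> c (ring_time \<omega> k))" for \<omega> c
  proof
    assume "\<exists>s. P \<omega> c s"
    then obtain s where "P \<omega> c s" "s \<in> \<rat> \<or> s = t \<or> s \<in> range (ring_time \<omega>)"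
      using gapX_zero_countable_witness unfolding P_def by meson
    then show "(\<exists>q::rat. P \<omega> c (of_rat q)) \<or> P \<omega> c t \<or> (\<exists>k. P \<omega> c (ring_time \<omega> k))"
      by (auto elim!: Rats_cases)
  qed blast
  have [measurable]: "Measurable.pred (crystal_space n b1) (\<lambda>\<omega>. \<exists>s. P \<omega> c s)" for c
    unfolding ex_iff unfolding P_def by measurable
  have "c < tauX b0 b1 b2 \<omega> j t \<longleftrightarrow>
      (\<exists>s. P \<omega> (-1) s) \<and> (\<exists>s. P \<omega> c s) \<or> \<not> (\<exists>s. P \<omega> (-1) s) \<and> c < Sup {}" for \<omega>
  proof (cases "\<exists>s. P \<omega> (-1) s")
    case True
    define Z where "Z = {s. 0 \<le> s \<and> s \<le> t \<and> gapX b0 b1 b2 \<omega> j s = 0}"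
    have "Z \<noteq> {}" "bdd_above Z"
      using True by (auto simp: P_def Z_def intro: bdd_aboveI[of _ t])
    then have "c < Sup Z \<longleftrightarrow> (\<exists>s. P \<omega> c s)"
      by (subst less_cSup_iff) (auto simp: P_def Z_def)
    then show ?thesis
      using True by (simp add: tauX_def Z_def)
  next
    case False
    then have "{s. 0 \<le> s \<and> s \<le> t \<and> gapX b0 b1 b2 \<omega> j s = 0} = {}"
      by (auto simp: P_def)
    then show ?thesis
      using False unfolding tauX_def by (simp only:) simp
  qed
  then have "{\<omega> \<in> space (crystal_space n b1). c < tauX b0 b1 b2 \<omega> j t} =
      {\<omega> \<in> space (crystal_space n b1). (\<exists>s. P \<omega> (-1) s) \<and> (\<exists>s. P \<omega> c s) \<or> \<not> (\<exists>s. P \<omega> (-1) s) \<and> c < Sup {}}"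
    by simp
  also have "\<dots> \<in> sets (crystal_space n b1)"
    by measurable
  finally show "{\<omega> \<in> space (crystal_space n b1). c < tauX b0 b1 b2 \<omega> j t} \<in> sets (crystal_space n b1)" .
qed

section \<open>Pathwise analysis of the gap\<close>

lemma ring_time_sdrop: "ring_time (sdrop i \<omega>) m = ring_time \<omega> (i + m) - ring_time \<omega> i"
  by (induction m) (simp_all add: ring_time_Suc sdrop_snth)

lemma ring_time_Stream_Suc: "ring_time (x ## \<omega>) (Suc i) = fst x + ring_time \<omega> i"
  unfolding ring_time_def by (subst sum.lessThan_Suc_shift) simp

lemma strict_mono_ring_time: "(\<And>i. 0 < fst (\<omega> !! i)) \<Longrightarrow> strict_mono (ring_time \<omega>)"
  by (simp add: strict_mono_Suc_iff ring_time_Suc)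

lemma finite_rings_eq_atLeastAtMost:
  fixes T :: "nat \<Rightarrow> 'a::linorder"
  assumes "mono T" "finite {k. 0 < k \<and> T k \<le> s}"
  shows "{k. 0 < k \<and> T k \<le> s} = {1..card {k. 0 < k \<and> T k \<le> s}}"
proof (cases "{k. 0 < k \<and> T k \<le> s} = {}")
  case False
  define M where "M = Max {k. 0 < k \<and> T k \<le> s}"
  have "M \<in> {k. 0 < k \<and> T k \<le> s}"
    using Max_in[OF assms(2) False] by (simp add: M_def)
  then have "{k. 0 < k \<and> T k \<le> s} = {1..M}"
    using Max_ge[OF assms(2)] \<open>mono T\<close> by (fastforce simp: M_def dest: monoD)
  then show ?thesis
    by simp
next
  case True
  then show ?thesis
    by (simp only: card.empty) simp
qed

definition first_ring_from :: "(real \<times> nat \<times> real) stream \<Rightarrow> real \<Rightarrow> nat \<Rightarrow> bool"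
  where "first_ring_from \<omega> a i \<longleftrightarrow> a \<le> ring_time \<omega> i \<and> (\<forall>i' < i. ring_time \<omega> i' < a)"

definition rings_within :: "(real \<times> nat \<times> real) stream \<Rightarrow> real \<Rightarrow> nat \<Rightarrow> real \<Rightarrow> bool"
  where "rings_within \<omega> a m w \<longleftrightarrow> (\<exists>i. first_ring_from \<omega> a i \<and> ring_time (sdrop i \<omega>) m \<le> w)"

lemma measurable_first_ring_from[measurable]:
  "Measurable.pred (crystal_space n b1) (\<lambda>\<omega>. first_ring_from \<omega> a i)"
  unfolding first_ring_from_def by measurable

lemma measurable_rings_within[measurable]:
  "Measurable.pred (crystal_space n b1) (\<lambda>\<omega>. rings_within \<omega> a m w)"
  unfolding rings_within_def ring_time_sdrop by measurable

lemma first_ring_from_unique: "first_ring_from \<omega> a i \<Longrightarrow> first_ring_from \<omega> a i' \<Longrightarrow> i = i'"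
  unfolding first_ring_from_def by (metis linorder_neqE_nat not_le)

lemma first_ring_from_Least:
  assumes "a \<le> ring_time \<omega> i"
  shows "first_ring_from \<omega> a (LEAST i. a \<le> ring_time \<omega> i)" "(LEAST i. a \<le> ring_time \<omega> i) \<le> i"
  using assms LeastI[of "\<lambda>i. a \<le> ring_time \<omega> i"] not_less_Least[of _ "\<lambda>i. a \<le> ring_time \<omega> i"]
  by (auto simp: first_ring_from_def not_le intro: Least_le)

lemma first_ring_from_stake:
  assumes "stake i \<omega> = stake i \<omega>'"
  shows "first_ring_from \<omega> a i \<longleftrightarrow> first_ring_from \<omega>' a i"
proof -
  have "\<omega> !! l = \<omega>' !! l" if "l < i" for l
    using stake_nth[OF that, of \<omega>] stake_nth[OF that, of \<omega>'] assms by simp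
  then have "ring_time \<omega> k = ring_time \<omega>' k" if "k \<le> i" for k
    using that by (auto simp: ring_time_def intro!: sum.cong)
  then show ?thesis
    by (auto simp: first_ring_from_def)
qed

lemma chain_gap_Suc_le: "chain_gap b0 b1 b2 \<omega> j (Suc m) \<le> chain_gap b0 b1 b2 \<omega> j m + 1"
  by (auto simp: chain_gap_def Let_def)

lemma chain_gap_diff_le:
  "p \<le> m \<Longrightarrow> chain_gap b0 b1 b2 \<omega> j m - chain_gap b0 b1 b2 \<omega> j p \<le> int (m - p)"
proof (induction m rule: dec_induct)
  case (step m)
  then show ?case
    using chain_gap_Suc_le[of b0 b1 b2 \<omega> j m] by (simp add: Suc_diff_le)
qed simp

lemma nrings_eq_card_atLeastAtMost:
  assumes pos: "\<And>i. 0 < fst (\<omega> !! i)" and m: "nrings \<omega> t \<noteq> 0"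
  shows "finite {k. 0 < k \<and> ring_time \<omega> k \<le> t}"
    and "{k. 0 < k \<and> ring_time \<omega> k \<le> t} = {1..nrings \<omega> t}"
proof -
  show fin: "finite {k. 0 < k \<and> ring_time \<omega> k \<le> t}"
    using m by (metis card.infinite nrings_def)
  show "{k. 0 < k \<and> ring_time \<omega> k \<le> t} = {1..nrings \<omega> t}"
    using finite_rings_eq_atLeastAtMost[OF strict_mono_mono[OF strict_mono_ring_time[OF pos]] fin]
    by (simp add: nrings_def)
qed

lemma chain_gap_last_zero:
  assumes "int K \<le> chain_gap b0 b1 b2 \<omega> j m"
  obtains p where "p + K \<le> m" "chain_gap b0 b1 b2 \<omega> j p = 0"
    "\<And>p'. p' \<le> m \<Longrightarrow> chain_gap b0 b1 b2 \<omega> j p' = 0 \<Longrightarrow> p' \<le> p"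
proof -
  let ?G = "chain_gap b0 b1 b2 \<omega> j"
  define p where "p = (GREATEST p. p \<le> m \<and> ?G p = 0)"
  have p: "p \<le> m" "?G p = 0" and "\<And>p'. p' \<le> m \<Longrightarrow> ?G p' = 0 \<Longrightarrow> p' \<le> p"
    using GreatestI_nat[of "\<lambda>p. p \<le> m \<and> ?G p = 0" 0 m] Greatest_le_nat[of "\<lambda>p. p \<le> m \<and> ?G p = 0" _ m]
    by (auto simp: p_def)
  moreover have "p + K \<le> m"
    using chain_gap_diff_le[OF p(1), of b0 b1 b2 \<omega> j] assms p by (simp add: of_nat_diff)
  ultimately show ?thesis
    using that by blast
qed

lemma tauX_le_ring_time_after_last_zero:
  assumes pos: "\<And>i. 0 < fst (\<omega> !! i)" and m: "nrings \<omega> t \<noteq> 0"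
    and p_max: "\<And>p'. p' \<le> nrings \<omega> t \<Longrightarrow> chain_gap b0 b1 b2 \<omega> j p' = 0 \<Longrightarrow> p' \<le> p"
  shows "0 \<le> tauX b0 b1 b2 \<omega> j t" "tauX b0 b1 b2 \<omega> j t \<le> t"
    "tauX b0 b1 b2 \<omega> j t \<le> ring_time \<omega> (Suc p)"
proof -
  define R where "R s = {k. 0 < k \<and> ring_time \<omega> k \<le> s}" for s
  define Z where "Z = {s. 0 \<le> s \<and> s \<le> t \<and> gapX b0 b1 b2 \<omega> j s = 0}"
  note R_t = nrings_eq_card_atLeastAtMost[OF pos m, folded R_def]
  have T_pos: "0 < ring_time \<omega> k" if "0 < k" for k
    using strict_monoD[OF strict_mono_ring_time[OF pos] that] by simp
  have "nrings \<omega> t \<in> R t"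
    using R_t(2) m by simp
  then have "0 \<le> t"
    using T_pos[of "nrings \<omega> t"] m by (simp add: R_def)
  moreover have "{k. 0 < k \<and> ring_time \<omega> k \<le> 0} = {}"
    using T_pos by (auto dest: leD)
  then have "nrings \<omega> 0 = 0"
    unfolding nrings_def by (simp only: card.empty)
  ultimately have "0 \<in> Z"
    by (simp add: Z_def gapX_eq_chain_gap)
  have Z_less: "s < ring_time \<omega> (Suc p)" if "s \<in> Z" for s
  proof (rule ccontr)
    assume "\<not> s < ring_time \<omega> (Suc p)"
    then have "{1..Suc p} \<subseteq> R s"
      using monoD[OF strict_mono_mono[OF strict_mono_ring_time[OF pos]], of _ "Suc p"]
      by (force simp: R_def not_less)
    moreover have "R s \<subseteq> R t"
      using that by (auto simp: R_def Z_def)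
    ultimately have "card {1..Suc p} \<le> card (R s)" "card (R s) \<le> card (R t)"
      using R_t(1) by (meson card_mono finite_subset)+
    then have "Suc p \<le> nrings \<omega> s" "nrings \<omega> s \<le> nrings \<omega> t"
      by (simp_all add: nrings_def R_def)
    then show False
      using p_max[of "nrings \<omega> s"] that by (simp add: Z_def gapX_eq_chain_gap)
  qed
  have "bdd_above Z"
    by (auto simp: Z_def intro: bdd_aboveI[of _ t])
  then have "0 \<le> Sup Z" "Sup Z \<le> t" "Sup Z \<le> ring_time \<omega> (Suc p)"
    using \<open>0 \<in> Z\<close> Z_less by (auto intro!: cSup_upper cSup_least simp: Z_def less_imp_le)
  then show "0 \<le> tauX b0 b1 b2 \<omega> j t" "tauX b0 b1 b2 \<omega> j t \<le> t"
    "tauX b0 b1 b2 \<omega> j t \<le> ring_time \<omega> (Suc p)"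
    by (simp_all add: tauX_def Z_def)
qed

text \<open>If the gap is at least K at time t, the jump chain has made at least K steps since its
  last zero, all of them by time t; so K - 1 more rings follow the first ring after any time
  a \<le> tau within the remaining time t - a.\<close>
lemma gap_ge_imp_rings_within:
  assumes pos: "\<And>i. 0 < fst (\<omega> !! i)" and K: "1 \<le> K"
    and gap: "int K \<le> gapX b0 b1 b2 \<omega> j t"
  shows "0 \<le> tauX b0 b1 b2 \<omega> j t" "tauX b0 b1 b2 \<omega> j t \<le> t"
    and "a \<le> tauX b0 b1 b2 \<omega> j t \<Longrightarrow> rings_within \<omega> a (K - 1) (t - a)"
proof -
  define m where "m = nrings \<omega> t"
  have gap_m: "int K \<le> chain_gap b0 b1 b2 \<omega> j m"
    using gap by (simp add: m_def gapX_eq_chain_gap)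
  then have "m \<noteq> 0"
    using K by (intro notI) simp
  obtain p where "p + K \<le> m" and p_max: "\<And>p'. p' \<le> m \<Longrightarrow> chain_gap b0 b1 b2 \<omega> j p' = 0 \<Longrightarrow> p' \<le> p"
    using chain_gap_last_zero[OF gap_m] by blast
  note tau = tauX_le_ring_time_after_last_zero[where ?b0.0=b0 and ?b1.0=b1 and ?b2.0=b2 and j=j and p=p,
      OF pos \<open>m \<noteq> 0\<close>[unfolded m_def] p_max[unfolded m_def]]
  then show "0 \<le> tauX b0 b1 b2 \<omega> j t" "tauX b0 b1 b2 \<omega> j t \<le> t"
    by simp_all
  have "m \<in> {1..nrings \<omega> t}"
    using \<open>m \<noteq> 0\<close> by (simp add: m_def)
  then have "ring_time \<omega> m \<le> t"
    using nrings_eq_card_atLeastAtMost(2)[OF pos \<open>m \<noteq> 0\<close>[unfolded m_def]] by blast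
  assume "a \<le> tauX b0 b1 b2 \<omega> j t"
  then have a: "a \<le> ring_time \<omega> (Suc p)"
    using tau(3) by simp
  define i where "i = (LEAST i. a \<le> ring_time \<omega> i)"
  have i: "first_ring_from \<omega> a i" "i \<le> Suc p"
    using first_ring_from_Least[OF a] by (simp_all add: i_def)
  then have "i + (K - 1) \<le> m"
    using \<open>p + K \<le> m\<close> K by linarith
  then have "ring_time \<omega> (i + (K - 1)) \<le> ring_time \<omega> m"
    by (rule monoD[OF strict_mono_mono[OF strict_mono_ring_time[OF pos]]])
  then have "ring_time (sdrop i \<omega>) (K - 1) \<le> t - a"
    using i(1) \<open>ring_time \<omega> m \<le> t\<close> unfolding ring_time_sdrop first_ring_from_def by linarith
  then show "rings_within \<omega> a (K - 1) (t - a)"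
    using i(1) by (auto simp: rings_within_def)
qed

text \<open>Classify by the unit interval [l - 1, l) containing the last zero tau of the gap; when
  l would exceed floor t, it suffices to know that tau \<ge> t - 1.\<close>
lemma gap_ge_imp_excursion_rings_within:
  assumes pos: "\<And>i. 0 < fst (\<omega> !! i)" and K: "1 \<le> K" and t: "0 \<le> t"
    and gap: "int K \<le> gapX b0 b1 b2 \<omega> j t"
  shows "(\<exists>l\<le>nat \<lfloor>t\<rfloor>. 0 < gapX b0 b1 b2 \<omega> j t \<and> tauX b0 b1 b2 \<omega> j t \<in> {real l - 1..<real l} \<and>
      rings_within \<omega> (real l - 1) (K - 1) (t - (real l - 1)))
    \<or> rings_within \<omega> (t - 1) (K - 1) 1"
proof -
  define \<tau> where "\<tau> = tauX b0 b1 b2 \<omega> j t"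
  note within = gap_ge_imp_rings_within[OF pos K gap, folded \<tau>_def]
  define l where "l = nat \<lfloor>\<tau>\<rfloor> + 1"
  have l: "real l - 1 \<le> \<tau>" "\<tau> < real l"
    using within(1) by (simp_all add: l_def) linarith+
  show ?thesis
  proof (cases "l \<le> nat \<lfloor>t\<rfloor>")
    case True
    then show ?thesis
      using gap K l within(3)[OF l(1)] by (auto simp: \<tau>_def)
  next
    case False
    then have "nat \<lfloor>t\<rfloor> \<le> nat \<lfloor>\<tau>\<rfloor>"
      by (simp add: l_def)
    then have "real_of_int \<lfloor>t\<rfloor> \<le> real_of_int \<lfloor>\<tau>\<rfloor>"
      using within(1) by (simp add: nat_le_eq_zle)
    then have "t - 1 \<le> \<tau>"
      using floor_correct[of t] floor_correct[of \<tau>] by linarith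
    then have "rings_within \<omega> (t - 1) (K - 1) (t - (t - 1))"
      by (rule within(3))
    then show ?thesis
      by simp
  qed
qed

section \<open>Interpolating two exponential bounds\<close>

lemma min_exp_le_exp_convex:
  fixes x y \<rho> :: real
  assumes "0 \<le> \<rho>" "\<rho> \<le> 1"
  shows "min (exp x) (exp y) \<le> exp ((1 - \<rho>) * x + \<rho> * y)"
proof -
  have "(1 - \<rho>) * min x y \<le> (1 - \<rho>) * x" "\<rho> * min x y \<le> \<rho> * y"
    using assms by (simp_all add: mult_left_mono)
  then have "min x y \<le> (1 - \<rho>) * x + \<rho> * y"
    by (simp add: algebra_simps)
  moreover have "min (exp x) (exp y) = exp (min x y)"
    by (simp add: min_def)
  ultimately show ?thesis
    by simp
qed

lemma half_power_eq_exp: "(1 / 2 :: real) ^ k = exp (- (real k * ln 2))"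
  by (simp add: powr_realpow[symmetric] powr_def ln_div)

text \<open>With the weight \<rho> = a / (2 (l + a)) of the geometric mean, the time growth l of the
  second bound uses up exactly half of the time decay a of the first, while a fraction \<rho> of
  the decay in K survives.\<close>
lemma min_exp_bounds_le:
  fixes c a l d :: real and K :: nat
  assumes c: "0 < c" and a: "0 < a" and l: "0 < l" and K: "1 \<le> K"
  defines "\<rho> \<equiv> a / (2 * (l + a))"
  shows "min (c * exp (- a * d)) (exp (l * (d + 1)) * (1 / 2) ^ (K - 1))
    \<le> exp ((1 - \<rho>) * ln c + \<rho> * (l + ln 2)) * exp (- (a / 2) * d) * exp (- (\<rho> * ln 2) * real K)"
proof -
  have \<rho>: "0 \<le> \<rho>" "\<rho> \<le> 1" "\<rho> * (l + a) = a / 2"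
    using a l by (simp_all add: \<rho>_def field_simps)
  have "min (c * exp (- a * d)) (exp (l * (d + 1)) * (1 / 2) ^ (K - 1))
      = min (exp (ln c - a * d)) (exp (l * (d + 1) - real (K - 1) * ln 2))"
    using c unfolding half_power_eq_exp by (simp add: exp_diff exp_minus field_simps)
  also have "\<dots> \<le> exp ((1 - \<rho>) * (ln c - a * d) + \<rho> * (l * (d + 1) - real (K - 1) * ln 2))"
    using \<rho>(1,2) by (rule min_exp_le_exp_convex)
  also have "(1 - \<rho>) * (ln c - a * d) + \<rho> * (l * (d + 1) - real (K - 1) * ln 2)
      = ((1 - \<rho>) * ln c + \<rho> * (l + ln 2)) - (a - \<rho> * (l + a)) * d - \<rho> * ln 2 * real K"
    using K by (simp add: of_nat_diff algebra_simps)
  also have "\<dots> = ((1 - \<rho>) * ln c + \<rho> * (l + ln 2)) + (- (a / 2) * d) + (- (\<rho> * ln 2) * real K)"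
    using \<rho>(3) by simp
  finally show ?thesis
    by (simp only: exp_add)
qed

lemma sum_power_diff_le:
  fixes q :: real
  assumes "0 < q" "q < 1"
  shows "(\<Sum>i\<le>N. q ^ (N - i)) \<le> 1 / (1 - q)"
proof -
  have "(\<Sum>i\<le>N. q ^ (N - i)) = (\<Sum>i<Suc N. q ^ (Suc N - Suc i))"
    by (simp add: lessThan_Suc_atMost)
  also have "\<dots> = (\<Sum>i<Suc N. q ^ i)"
    by (rule sum.nat_diff_reindex)
  also have "\<dots> \<le> 1 / (1 - q)"
    using geometric_sum_less[OF assms, of "{..<Suc N}"] by (simp only: finite_lessThan less_imp_le)
  finally show ?thesis .
qed

lemma half_power_le_exp:
  fixes \<rho> :: real
  assumes "1 \<le> K" "\<rho> \<le> 1"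
  shows "(1 / 2 :: real) ^ (K - 1) \<le> 2 * exp (- (\<rho> * ln 2) * real K)"
proof -
  have "(1 / 2 :: real) ^ (K - 1) = 2 * (1 / 2) ^ K"
    using assms(1) by (cases K) simp_all
  also have "\<dots> = 2 * exp (- (real K * ln 2))"
    by (simp only: half_power_eq_exp)
  also have "\<dots> \<le> 2 * exp (- (\<rho> * ln 2) * real K)"
    using assms by (simp add: mult_left_le_one_le)
  finally show ?thesis .
qed

lemma sum_min_exp_bounds_le:
  fixes c a l :: real
  assumes c: "0 < c" and a: "0 < a" and l: "0 < l"
  obtains C \<alpha> :: real where "0 < C" "0 < \<alpha>"
    "\<And>t (N::nat) (K::nat). real N \<le> t \<Longrightarrow> 1 \<le> K \<Longrightarrow>
      (\<Sum>i\<le>N. min (c * exp (- a * (t - real i))) (exp (l * (t - real i + 1)) * (1 / 2) ^ (K - 1)))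
        + exp l * (1 / 2) ^ (K - 1) \<le> C * exp (- \<alpha> * real K)"
proof
  define \<rho> where "\<rho> = a / (2 * (l + a))"
  define c1 where "c1 = exp ((1 - \<rho>) * ln c + \<rho> * (l + ln 2))"
  define q where "q = exp (- (a / 2))"
  have q: "0 < q" "q < 1"
    using a by (simp_all add: q_def)
  have \<rho>: "0 < \<rho>" "\<rho> \<le> 1"
    using a l by (simp_all add: \<rho>_def field_simps)
  show "0 < c1 / (1 - q) + 2 * exp l"
    using q by (simp add: c1_def add_pos_pos)
  show "0 < \<rho> * ln 2"
    using \<rho> by simp
  fix t :: real and N K :: nat
  assume N: "real N \<le> t" and K: "1 \<le> K"
  define E where "E = exp (- (\<rho> * ln 2) * real K)"
  have "min (c * exp (- a * (t - real i))) (exp (l * (t - real i + 1)) * (1 / 2) ^ (K - 1))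
      \<le> c1 * E * q ^ (N - i)" if "i \<le> N" for i
  proof -
    have "min (c * exp (- a * (t - real i))) (exp (l * (t - real i + 1)) * (1 / 2) ^ (K - 1))
        \<le> c1 * exp (- (a / 2) * (t - real i)) * E"
      using min_exp_bounds_le[OF c a l K, of "t - real i"]
      unfolding \<rho>_def[symmetric] c1_def[symmetric] E_def[symmetric] by simp
    also have "exp (- (a / 2) * (t - real i)) \<le> exp (- (a / 2) * real (N - i))"
      using that N a by simp
    also have "\<dots> = q ^ (N - i)"
      by (simp add: q_def exp_of_nat_mult[symmetric] mult.commute)
    finally show ?thesis
      by (simp add: c1_def E_def mult_ac mult_right_mono)
  qed
  then have "(\<Sum>i\<le>N. min (c * exp (- a * (t - real i))) (exp (l * (t - real i + 1)) * (1 / 2) ^ (K - 1)))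
      \<le> c1 * E * (\<Sum>i\<le>N. q ^ (N - i))"
    unfolding sum_distrib_left by (intro sum_mono) simp
  also have "\<dots> \<le> c1 * E * (1 / (1 - q))"
    using sum_power_diff_le[OF q, of N] by (rule mult_left_mono) (simp add: c1_def E_def)
  finally have "(\<Sum>i\<le>N. min (c * exp (- a * (t - real i))) (exp (l * (t - real i + 1)) * (1 / 2) ^ (K - 1)))
      \<le> c1 / (1 - q) * E"
    by simp
  moreover have "exp l * (1 / 2) ^ (K - 1) \<le> exp l * (2 * E)"
    using half_power_le_exp[OF K \<rho>(2)] by (simp add: E_def)
  moreover have "(c1 / (1 - q) + 2 * exp l) * E = c1 / (1 - q) * E + exp l * (2 * E)"
    by (simp add: algebra_simps)
  ultimately show "(\<Sum>i\<le>N. min (c * exp (- a * (t - real i))) (exp (l * (t - real i + 1)) * (1 / 2) ^ (K - 1)))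
      + exp l * (1 / 2) ^ (K - 1) \<le> (c1 / (1 - q) + 2 * exp l) * exp (- (\<rho> * ln 2) * real K)"
    unfolding E_def by linarith
qed

section \<open>Exponential clocks and the strong Markov property\<close>

lemma nn_integral_exp_exponential_density:
  fixes l :: real
  assumes l: "0 < l"
  shows "(\<integral>\<^sup>+x. ennreal (exp (- (l * x))) \<partial>density lborel (exponential_density l)) = ennreal (1 / 2)"
proof -
  have eq: "exponential_density l x * exp (- (l * x)) = 1 / 2 * exponential_density (2 * l) x" for x
    by (auto simp: exponential_density_def mult_exp_exp algebra_simps)
  have "ennreal (exponential_density l x) * ennreal (exp (- (l * x)))
      = ennreal (1 / 2) * ennreal (exponential_density (2 * l) x)" for x
  proof -
    have "ennreal (exponential_density l x) * ennreal (exp (- (l * x)))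
        = ennreal (exponential_density l x * exp (- (l * x)))"
      using l by (intro ennreal_mult'[symmetric] exponential_density_nonneg)
    also have "\<dots> = ennreal (1 / 2) * ennreal (exponential_density (2 * l) x)"
      by (simp only: eq) (rule ennreal_mult', simp)
    finally show ?thesis .
  qed
  then have "(\<integral>\<^sup>+x. ennreal (exp (- (l * x))) \<partial>density lborel (exponential_density l))
      = (\<integral>\<^sup>+x. ennreal (1 / 2) * ennreal (exponential_density (2 * l) x) \<partial>lborel)"
    by (simp add: nn_integral_density)
  also have "\<dots> = ennreal (1 / 2) * emeasure (density lborel (exponential_density (2 * l))) UNIV"
    by (simp add: nn_integral_cmult emeasure_density)
  also have "\<dots> = ennreal (1 / 2)"
    using prob_space.emeasure_space_1[OF prob_space_exponential_density, of "2 * l"] l by simp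
  finally show ?thesis .
qed

lemma (in prob_space) nn_integral_stream_space_stake_sdrop:
  assumes f: "f \<in> borel_measurable (stream_space M)" and g: "g \<in> borel_measurable (stream_space M)"
    and f_stake: "\<And>\<omega> \<omega>'. stake i \<omega> = stake i \<omega>' \<Longrightarrow> f \<omega> = f \<omega>'"
  shows "(\<integral>\<^sup>+\<omega>. f \<omega> * g (sdrop i \<omega>) \<partial>stream_space M)
    = (\<integral>\<^sup>+\<omega>. f \<omega> \<partial>stream_space M) * (\<integral>\<^sup>+\<omega>. g \<omega> \<partial>stream_space M)"
  using f f_stake
proof (induction i arbitrary: f)
  case 0
  interpret S: prob_space "stream_space M"
    by (rule prob_space_stream_space)
  define c where "c = f undefined"
  have "f = (\<lambda>_. c)"
    using "0.prems"(2) by (auto simp: c_def)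
  then show ?case
    using g by (simp add: nn_integral_cmult S.emeasure_space_1)
next
  case (Suc i)
  interpret S: prob_space "stream_space M"
    by (rule prob_space_stream_space)
  have f_Cons [measurable]: "(\<lambda>(x, \<omega>). f (x ## \<omega>)) \<in> borel_measurable (M \<Otimes>\<^sub>M stream_space M)"
    using Suc.prems(1) by measurable
  have IH: "(\<integral>\<^sup>+\<omega>. f (x ## \<omega>) * g (sdrop i \<omega>) \<partial>stream_space M)
      = (\<integral>\<^sup>+\<omega>. f (x ## \<omega>) \<partial>stream_space M) * (\<integral>\<^sup>+\<omega>. g \<omega> \<partial>stream_space M)" if "x \<in> space M" for x
    using that Suc.prems(1) by (intro Suc.IH) (auto intro!: Suc.prems(2))
  have "(\<integral>\<^sup>+\<omega>. f \<omega> * g (sdrop (Suc i) \<omega>) \<partial>stream_space M)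
      = (\<integral>\<^sup>+x. \<integral>\<^sup>+\<omega>. f (x ## \<omega>) * g (sdrop i \<omega>) \<partial>stream_space M \<partial>M)"
    using Suc.prems(1) g by (subst nn_integral_stream_space) simp_all
  also have "\<dots> = (\<integral>\<^sup>+x. (\<integral>\<^sup>+\<omega>. f (x ## \<omega>) \<partial>stream_space M) * (\<integral>\<^sup>+\<omega>. g \<omega> \<partial>stream_space M) \<partial>M)"
    using IH by (rule nn_integral_cong)
  also have "\<dots> = (\<integral>\<^sup>+\<omega>. f \<omega> \<partial>stream_space M) * (\<integral>\<^sup>+\<omega>. g \<omega> \<partial>stream_space M)"
    using S.borel_measurable_nn_integral[OF f_Cons] Suc.prems(1)
    by (simp add: nn_integral_multc nn_integral_stream_space)
  finally show ?case .
qed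

context
  fixes n :: nat and b1 :: real
  assumes n: "0 < n" and b1: "0 < b1"
begin

lemma prob_space_mark_time: "prob_space (density lborel (exponential_density (real n * b1)))"
  using n b1 by (intro prob_space_exponential_density) simp

lemma prob_space_mark_site_uniform:
  "prob_space (measure_pmf (pmf_of_set {1..n}) \<Otimes>\<^sub>M uniform_measure lborel {0..1::real})"
  by (intro prob_space_pair prob_space_measure_pmf prob_space_uniform_measure) auto

lemma prob_space_mark_measure: "prob_space (mark_measure n b1)"
  unfolding mark_measure_def by (intro prob_space_pair prob_space_mark_time prob_space_mark_site_uniform)

lemma prob_space_crystal_space: "prob_space (crystal_space n b1)"
  unfolding crystal_space_def by (rule prob_space.prob_space_stream_space[OF prob_space_mark_measure])

lemma distr_mark_measure_fst:
  "distr (mark_measure n b1) (density lborel (exponential_density (real n * b1))) fst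
    = density lborel (exponential_density (real n * b1))"
  unfolding mark_measure_def by (rule prob_space.distr_pair_fst[OF prob_space_mark_site_uniform])

lemma AE_crystal_space_mark_time_pos: "AE \<omega> in crystal_space n b1. \<forall>i. 0 < fst (\<omega> !! i)"
proof -
  have "AE x in density lborel (exponential_density (real n * b1)). 0 < x"
    using AE_lborel_singleton[of 0]
    by (subst AE_density) (auto simp: exponential_density_def elim!: eventually_mono)
  then have "AE x in distr (mark_measure n b1) (density lborel (exponential_density (real n * b1))) fst. 0 < x"
    by (simp only: distr_mark_measure_fst)
  moreover have "fst \<in> measurable (mark_measure n b1) (density lborel (exponential_density (real n * b1)))"
    unfolding mark_measure_def by measurable
  ultimately have "AE x in mark_measure n b1. 0 < fst x"
    by (rule AE_distrD[rotated])
  then have "AE \<omega> in stream_space (mark_measure n b1). stream_all (\<lambda>x. 0 < fst x) \<omega>"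
    by (intro prob_space.AE_stream_all[OF prob_space_mark_measure]) (simp_all add: mark_measure_def)
  then show ?thesis
    unfolding crystal_space_def by (simp add: sset_range)
qed

lemma nn_integral_exp_ring_time:
  "(\<integral>\<^sup>+\<omega>. ennreal (exp (- (real n * b1 * ring_time \<omega> m))) \<partial>crystal_space n b1) = ennreal ((1 / 2) ^ m)"
proof (induction m)
  case 0
  then show ?case
    using prob_space.emeasure_space_1[OF prob_space_crystal_space] by simp
next
  case (Suc m)
  define l where "l = real n * b1"
  have [measurable]: "fst \<in> borel_measurable (mark_measure n b1)"
    "(\<lambda>\<omega>. ring_time \<omega> k) \<in> borel_measurable (stream_space (mark_measure n b1))" for k
    using measurable_ring_time[of k n b1] by (simp_all add: mark_measure_def crystal_space_def)
  have exp_Stream: "ennreal (exp (- (l * ring_time (x ## \<omega>) (Suc m))))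
      = ennreal (exp (- (l * fst x))) * ennreal (exp (- (l * ring_time \<omega> m)))" for x \<omega>
    unfolding ring_time_Stream_Suc distrib_left minus_add_distrib exp_add by (simp add: ennreal_mult)
  have "(\<integral>\<^sup>+\<omega>. ennreal (exp (- (l * ring_time \<omega> (Suc m)))) \<partial>crystal_space n b1)
      = (\<integral>\<^sup>+x. \<integral>\<^sup>+\<omega>. ennreal (exp (- (l * ring_time (x ## \<omega>) (Suc m))))
          \<partial>stream_space (mark_measure n b1) \<partial>mark_measure n b1)"
    unfolding crystal_space_def
    by (rule prob_space.nn_integral_stream_space[OF prob_space_mark_measure]) measurable
  also have "\<dots> = (\<integral>\<^sup>+x. \<integral>\<^sup>+\<omega>. ennreal (exp (- (l * fst x))) * ennreal (exp (- (l * ring_time \<omega> m)))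
          \<partial>stream_space (mark_measure n b1) \<partial>mark_measure n b1)"
    by (simp only: exp_Stream)
  also have "\<dots> = (\<integral>\<^sup>+x. ennreal (exp (- (l * fst x))) \<partial>mark_measure n b1) * ennreal ((1 / 2) ^ m)"
    using Suc.IH by (simp add: l_def nn_integral_cmult nn_integral_multc crystal_space_def)
  also have "(\<integral>\<^sup>+x. ennreal (exp (- (l * fst x))) \<partial>mark_measure n b1)
      = (\<integral>\<^sup>+x. ennreal (exp (- (l * x))) \<partial>distr (mark_measure n b1) (density lborel (exponential_density l)) fst)"
    by (rule nn_integral_distr[symmetric]) (simp_all add: mark_measure_def l_def)
  also have "\<dots> = ennreal (1 / 2)"
    using n b1 by (simp only: l_def distr_mark_measure_fst nn_integral_exp_exponential_density mult_pos_pos of_nat_0_less_iff)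
  also have "ennreal (1 / 2) * ennreal ((1 / 2) ^ m) = ennreal ((1 / 2) ^ Suc m)"
    by (subst power_Suc, rule ennreal_mult'[symmetric]) simp
  finally show ?case
    by (simp only: l_def)
qed

lemma emeasure_ring_time_le:
  "emeasure (crystal_space n b1) {\<omega> \<in> space (crystal_space n b1). ring_time \<omega> m \<le> w}
    \<le> ennreal (exp (real n * b1 * w) * (1 / 2) ^ m)"
  using Chernoff_ineq_nn_integral_le[of "real n * b1" "space (crystal_space n b1)" "crystal_space n b1"
      "\<lambda>\<omega>. ring_time \<omega> m" w] n b1 sets.top[of "crystal_space n b1"]
  by (simp add: nn_integral_exp_ring_time flip: ennreal_mult)

lemma sets_first_ring_from_sdrop:
  assumes "B \<in> sets (crystal_space n b1)"
  shows "{\<omega> \<in> space (crystal_space n b1). first_ring_from \<omega> a i \<and> sdrop i \<omega> \<in> B} \<in> sets (crystal_space n b1)"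
proof -
  have "sdrop i \<in> measurable (crystal_space n b1) (crystal_space n b1)"
    unfolding crystal_space_def by (rule measurable_sdrop)
  then have "sdrop i -` B \<inter> space (crystal_space n b1) \<in> sets (crystal_space n b1)"
    using assms by (rule measurable_sets)
  moreover have "{\<omega> \<in> space (crystal_space n b1). first_ring_from \<omega> a i} \<in> sets (crystal_space n b1)"
    by measurable
  moreover have "{\<omega> \<in> space (crystal_space n b1). first_ring_from \<omega> a i \<and> sdrop i \<omega> \<in> B}
      = {\<omega> \<in> space (crystal_space n b1). first_ring_from \<omega> a i} \<inter> (sdrop i -` B \<inter> space (crystal_space n b1))"
    by auto
  ultimately show ?thesis
    by (simp only: sets.Int)
qed

text \<open>The strong Markov property at the first ring after time a: the event that index i is
  this first ring depends only on the first i marks.\<close>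
lemma emeasure_first_ring_from_sdrop:
  assumes B: "B \<in> sets (crystal_space n b1)"
  shows "emeasure (crystal_space n b1)
      {\<omega> \<in> space (crystal_space n b1). first_ring_from \<omega> a i \<and> sdrop i \<omega> \<in> B}
    = emeasure (crystal_space n b1) {\<omega> \<in> space (crystal_space n b1). first_ring_from \<omega> a i}
      * emeasure (crystal_space n b1) B"
proof -
  let ?M = "crystal_space n b1"
  define A where "A = {\<omega> \<in> space ?M. first_ring_from \<omega> a i}"
  have "A \<in> sets ?M"
    unfolding A_def by measurable
  define D where "D = {\<omega> \<in> space ?M. first_ring_from \<omega> a i \<and> sdrop i \<omega> \<in> B}"
  have "D \<in> sets ?M"
    using B unfolding D_def by (rule sets_first_ring_from_sdrop)
  then have "emeasure ?M D = (\<integral>\<^sup>+\<omega>. indicator D \<omega> \<partial>?M)"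
    by simp
  also have "\<dots> = (\<integral>\<^sup>+\<omega>. indicator A \<omega> * indicator B (sdrop i \<omega>) \<partial>?M)"
    by (intro nn_integral_cong) (simp add: A_def D_def indicator_def space_crystal_space)
  also have "\<dots> = (\<integral>\<^sup>+\<omega>. indicator A \<omega> \<partial>?M) * (\<integral>\<^sup>+\<omega>. indicator B \<omega> \<partial>?M)"
    unfolding crystal_space_def
  proof (rule prob_space.nn_integral_stream_space_stake_sdrop[OF prob_space_mark_measure])
    show "indicator A \<in> borel_measurable (stream_space (mark_measure n b1))"
      "indicator B \<in> borel_measurable (stream_space (mark_measure n b1))"
      using \<open>A \<in> sets ?M\<close> B by (simp_all add: crystal_space_def)
    show "indicator A \<omega> = indicator A \<omega>'" if "stake i \<omega> = stake i \<omega>'" for \<omega> \<omega>'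
      using first_ring_from_stake[OF that] by (simp add: A_def indicator_def space_crystal_space)
  qed
  also have "\<dots> = emeasure ?M A * emeasure ?M B"
    using \<open>A \<in> sets ?M\<close> B by simp
  finally show ?thesis
    by (simp only: A_def D_def)
qed

lemma emeasure_rings_within_le:
  "emeasure (crystal_space n b1) {\<omega> \<in> space (crystal_space n b1). rings_within \<omega> a m w}
    \<le> ennreal (exp (real n * b1 * w) * (1 / 2) ^ m)"
proof -
  let ?M = "crystal_space n b1"
  interpret S: prob_space ?M
    by (rule prob_space_crystal_space)
  define A where "A i = {\<omega> \<in> space ?M. first_ring_from \<omega> a i}" for i
  define B where "B = {\<omega> \<in> space ?M. ring_time \<omega> m \<le> w}"
  define D where "D i = {\<omega> \<in> space ?M. first_ring_from \<omega> a i \<and> sdrop i \<omega> \<in> B}" for i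
  have [measurable]: "A i \<in> sets ?M" "B \<in> sets ?M" for i
    unfolding A_def B_def by measurable
  have "D i \<in> sets ?M" for i
    using \<open>B \<in> sets ?M\<close> unfolding D_def by (rule sets_first_ring_from_sdrop)
  have "disjoint_family A" "disjoint_family D"
    using first_ring_from_unique by (auto simp: disjoint_family_on_def A_def D_def)
  have "{\<omega> \<in> space ?M. rings_within \<omega> a m w} = (\<Union>i. D i)"
    by (auto simp: rings_within_def D_def B_def space_crystal_space)
  also have "emeasure ?M \<dots> = (\<Sum>i. emeasure ?M (D i))"
    using \<open>disjoint_family D\<close> \<open>\<And>i. D i \<in> sets ?M\<close> by (intro suminf_emeasure[symmetric]) auto
  also have "\<dots> = (\<Sum>i. emeasure ?M (A i)) * emeasure ?M B"
    by (simp add: D_def A_def emeasure_first_ring_from_sdrop)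
  also have "(\<Sum>i. emeasure ?M (A i)) = emeasure ?M (\<Union>i. A i)"
    using \<open>disjoint_family A\<close> by (intro suminf_emeasure) auto
  also have "emeasure ?M (\<Union>i. A i) * emeasure ?M B \<le> 1 * emeasure ?M B"
    by (intro mult_right_mono S.emeasure_le_1) simp
  also have "\<dots> \<le> ennreal (exp (real n * b1 * w) * (1 / 2) ^ m)"
    using emeasure_ring_time_le[of m w] by (simp add: B_def)
  finally show ?thesis .
qed

lemma measure_rings_within_le:
  "measure (crystal_space n b1) {\<omega> \<in> space (crystal_space n b1). rings_within \<omega> a m w}
    \<le> exp (real n * b1 * w) * (1 / 2) ^ m"
proof -
  interpret S: prob_space "crystal_space n b1"
    by (rule prob_space_crystal_space)
  show ?thesis
    using emeasure_rings_within_le[of a m w] by (simp add: S.emeasure_eq_measure)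
qed

lemma measure_gapX_ge_le:
  fixes t :: real and K :: nat
  assumes t: "0 \<le> t" and K: "1 \<le> K"
  shows "measure (crystal_space n b1) {\<omega> \<in> space (crystal_space n b1). int K \<le> gapX b0 b1 b2 \<omega> j t}
    \<le> (\<Sum>l\<le>nat \<lfloor>t\<rfloor>. min
          (measure (crystal_space n b1) {\<omega> \<in> space (crystal_space n b1). gapX b0 b1 b2 \<omega> j t > 0 \<and>
             tauX b0 b1 b2 \<omega> j t \<in> {real l - 1..<real l}})
          (exp (real n * b1 * (t - real l + 1)) * (1 / 2) ^ (K - 1)))
      + exp (real n * b1) * (1 / 2) ^ (K - 1)"
proof -
  let ?M = "crystal_space n b1"
  interpret S: prob_space ?M
    by (rule prob_space_crystal_space)
  define N where "N = nat \<lfloor>t\<rfloor>"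
  define H where "H l = {\<omega> \<in> space ?M. gapX b0 b1 b2 \<omega> j t > 0 \<and> tauX b0 b1 b2 \<omega> j t \<in> {real l - 1..<real l}}"
    for l :: nat
  define R where "R a = {\<omega> \<in> space ?M. rings_within \<omega> a (K - 1) (t - a)}" for a
  define U where "U = (\<Union>l\<le>N. H l \<inter> R (real l - 1)) \<union> R (t - 1)"
  have [measurable]: "H l \<in> sets ?M" "R a \<in> sets ?M" for l a
    unfolding H_def R_def by measurable
  have "AE \<omega> in ?M. int K \<le> gapX b0 b1 b2 \<omega> j t \<longrightarrow> \<omega> \<in> U"
    using AE_crystal_space_mark_time_pos
  proof eventually_elim
    case (elim \<omega>)
    then show ?case
      using gap_ge_imp_excursion_rings_within[OF _ K t, of \<omega> b0 b1 b2 j]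
      by (auto simp: U_def H_def R_def N_def space_crystal_space)
  qed
  then have "measure ?M {\<omega> \<in> space ?M. int K \<le> gapX b0 b1 b2 \<omega> j t} \<le> measure ?M U"
    by (intro S.finite_measure_mono_AE) (auto simp: U_def)
  also have "\<dots> \<le> measure ?M (\<Union>l\<le>N. H l \<inter> R (real l - 1)) + measure ?M (R (t - 1))"
    unfolding U_def by (rule measure_Un_le) auto
  also have "\<dots> \<le> (\<Sum>l\<le>N. measure ?M (H l \<inter> R (real l - 1))) + measure ?M (R (t - 1))"
    by (intro add_right_mono measure_UNION_le) auto
  also have "\<dots> \<le> (\<Sum>l\<le>N. min (measure ?M (H l)) (exp (real n * b1 * (t - real l + 1)) * (1 / 2) ^ (K - 1)))
      + exp (real n * b1) * (1 / 2) ^ (K - 1)"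
  proof (intro add_mono sum_mono min.boundedI)
    fix l
    show "measure ?M (H l \<inter> R (real l - 1)) \<le> measure ?M (H l)"
      by (intro S.finite_measure_mono) auto
    have "measure ?M (H l \<inter> R (real l - 1)) \<le> measure ?M (R (real l - 1))"
      by (intro S.finite_measure_mono) auto
    also have "\<dots> \<le> exp (real n * b1 * (t - real l + 1)) * (1 / 2) ^ (K - 1)"
      using measure_rings_within_le[of "real l - 1" "K - 1" "t - (real l - 1)"]
      by (simp add: R_def algebra_simps)
    finally show "measure ?M (H l \<inter> R (real l - 1)) \<le> exp (real n * b1 * (t - real l + 1)) * (1 / 2) ^ (K - 1)" .
  next
    show "measure ?M (R (t - 1)) \<le> exp (real n * b1) * (1 / 2) ^ (K - 1)"
      using measure_rings_within_le[of "t - 1" "K - 1" 1] by (simp add: R_def)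
  qed
  finally show ?thesis
    by (simp add: H_def N_def)
qed


lemma gapX_exponential_tail:
  assumes Cj: "0 < Cj" and \<alpha>j: "0 < \<alpha>j"
    and excursion: "\<And>t l. 0 \<le> t \<Longrightarrow> real l \<le> t \<Longrightarrow>
      measure (crystal_space n b1) {\<omega> \<in> space (crystal_space n b1). gapX b0 b1 b2 \<omega> j t > 0 \<and>
        tauX b0 b1 b2 \<omega> j t \<in> {real l - 1..<real l}} \<le> Cj * exp (- \<alpha>j * (t - real l))"
  obtains C \<alpha> where "0 < C" "0 < \<alpha>" "\<And>t k. 0 \<le> t \<Longrightarrow> 0 \<le> k \<Longrightarrow>
    measure (crystal_space n b1) {\<omega> \<in> space (crystal_space n b1). k \<le> real_of_int (gapX b0 b1 b2 \<omega> j t)}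
      \<le> C * exp (- \<alpha> * k)"
proof -
  interpret prob_space "crystal_space n b1"
    by (rule prob_space_crystal_space)
  obtain C \<alpha> where C: "0 < C" and \<alpha>: "0 < \<alpha>" and bound: "\<And>t N K. real N \<le> t \<Longrightarrow> 1 \<le> K \<Longrightarrow>
      (\<Sum>l\<le>N. min (Cj * exp (- \<alpha>j * (t - real l))) (exp (real n * b1 * (t - real l + 1)) * (1 / 2) ^ (K - 1)))
        + exp (real n * b1) * (1 / 2) ^ (K - 1) \<le> C * exp (- \<alpha> * real K)"
    using sum_min_exp_bounds_le[OF Cj \<alpha>j mult_pos_pos[OF of_nat_0_less_iff[THEN iffD2, OF n] b1]] by blast
  have tail: "measure (crystal_space n b1) {\<omega> \<in> space (crystal_space n b1). k \<le> real_of_int (gapX b0 b1 b2 \<omega> j t)}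
      \<le> max 1 C * exp (- \<alpha> * k)" if t: "0 \<le> t" and k: "0 \<le> k" for t k
  proof (cases "k = 0")
    case True
    have "measure (crystal_space n b1)
        {\<omega> \<in> space (crystal_space n b1). k \<le> real_of_int (gapX b0 b1 b2 \<omega> j t)} \<le> 1"
      by (rule prob_le_1)
    then show ?thesis
      using True by (simp add: le_max_iff_disj)
  next
    case False
    define K where "K = nat \<lceil>k\<rceil>"
    have K: "1 \<le> K" "k \<le> real K"
      using False k by (simp_all add: K_def) linarith+
    have "{\<omega> \<in> space (crystal_space n b1). k \<le> real_of_int (gapX b0 b1 b2 \<omega> j t)}
        = {\<omega> \<in> space (crystal_space n b1). int K \<le> gapX b0 b1 b2 \<omega> j t}"
      using k by (auto simp: K_def ceiling_le_iff)
    also have "measure (crystal_space n b1) \<dots>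
        \<le> (\<Sum>l\<le>nat \<lfloor>t\<rfloor>. min (Cj * exp (- \<alpha>j * (t - real l)))
            (exp (real n * b1 * (t - real l + 1)) * (1 / 2) ^ (K - 1)))
          + exp (real n * b1) * (1 / 2) ^ (K - 1)"
      using t of_nat_floor[OF t]
      by (intro order.trans[OF measure_gapX_ge_le[OF t K(1)]] add_right_mono sum_mono
          min.mono excursion order_refl) (auto intro: order_trans)
    also have "\<dots> \<le> C * exp (- \<alpha> * real K)"
      using t K(1) by (intro bound) simp_all
    also have "\<dots> \<le> C * exp (- \<alpha> * k)"
      using C \<alpha> K(2) by simp
    also have "\<dots> \<le> max 1 C * exp (- \<alpha> * k)"
      by (simp add: mult_right_mono)
    finally show ?thesis .
  qed
  show ?thesis
    by (rule that[OF _ \<alpha> tail]) simp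
qed
end

theorem lemma11:
  fixes b0 b1 b2 :: real and n j :: nat
  assumes rates_nonneg: "0 \<le> b0"
    and order: "b0 < b2" "b2 < b1"
    and n: "2 \<le> n"
    and j: "1 \<le> j" "j \<le> n - 1"
    and hyp: "\<exists>Cj \<alpha>j. Cj > 0 \<and> \<alpha>j > 0 \<and>
      (\<forall>t::real. t \<ge> 0 \<longrightarrow> (\<forall>l::nat. real l \<le> t \<longrightarrow>
         measure (crystal_space n b1)
           {\<omega> \<in> space (crystal_space n b1). gapX b0 b1 b2 \<omega> j t > 0 \<and>
              tauX b0 b1 b2 \<omega> j t \<in> {real l - 1..<real l}}
         \<le> Cj * exp (- \<alpha>j * (t - real l))))"
  shows "\<exists>C \<alpha>. C > 0 \<and> \<alpha> > 0 \<and>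
      (\<forall>t::real. t \<ge> 0 \<longrightarrow> (\<forall>k::real. k \<ge> 0 \<longrightarrow>
         measure (crystal_space n b1)
           {\<omega> \<in> space (crystal_space n b1). real_of_int (gapX b0 b1 b2 \<omega> j t) \<ge> k}
         \<le> C * exp (- \<alpha> * k)))"
proof -
  obtain Cj \<alpha>j where Cj: "0 < Cj" and \<alpha>j: "0 < \<alpha>j"
    and excursion: "\<And>t l. 0 \<le> t \<Longrightarrow> real l \<le> t \<Longrightarrow>
      measure (crystal_space n b1) {\<omega> \<in> space (crystal_space n b1). gapX b0 b1 b2 \<omega> j t > 0 \<and>
        tauX b0 b1 b2 \<omega> j t \<in> {real l - 1..<real l}} \<le> Cj * exp (- \<alpha>j * (t - real l))"
    using hyp by blast
  have n0: "0 < n" and b1: "0 < b1"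
    using n order rates_nonneg by simp_all
  show ?thesis
  proof (rule gapX_exponential_tail[OF n0 b1 Cj \<alpha>j excursion])
    fix C \<alpha> :: real
    assume "0 < C" "0 < \<alpha>" and "\<And>t k. 0 \<le> t \<Longrightarrow> 0 \<le> k \<Longrightarrow>
      measure (crystal_space n b1) {\<omega> \<in> space (crystal_space n b1). k \<le> real_of_int (gapX b0 b1 b2 \<omega> j t)}
        \<le> C * exp (- \<alpha> * k)"
    then show ?thesis
      by (intro exI[of _ C] exI[of _ \<alpha>]) auto
  qed
qed

end
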